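(* Let $\mathrm{NT}=\{(x_1,x_2,x_3)\in\mathbb{R}^3: 2^kx_1+2\cdot 3^kx_2+5^kx_3\ge 0 \text{ for all integers } k\ge 0\}$ with topological boundary $\partial\mathrm{NT}$. Then for every integer $n\ge 0$, the point $\left(\frac{1}{2^n},-\frac{1}{3^n},\frac{1}{5^n}\right)$ lies in $\partial\mathrm{NT}$.
   Context: $\mathrm{NT}$ is the non-termination set of the loop "while $(x_1+2x_2+x_3\ge 0)$ $\{(x_1,x_2,x_3):=(2x_1,3x_2,5x_3)\}$". *)

theory Defs
  imports "HOL-Analysis.Analysis"
begin

text \<open>Non-termination set of the loop
  while (x1 + 2 x2 + x3 \<ge> 0) do (x1,x2,x3) := (2 x1, 3 x2, 5 x3),
  as a subset of R^3 = real \<times> real \<times> real (product topology = Euclidean).\<close>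
definition NT :: "(real \<times> real \<times> real) set" where
  "NT = {(x1, x2, x3). \<forall>k::nat. 2^k * x1 + 2 * 3^k * x2 + 5^k * x3 \<ge> 0}"

end

theory Submission
  imports Defs
begin

(* The point p_n = (1/2^n, -1/3^n, 1/5^n) satisfies the k-th loop guard
   2^k x1 + 2*3^k x2 + 5^k x3 >= 0 with value
     2^m - 2*3^m + 5^m            if k = n + m, and
     1/2^m - 2/3^m + 1/5^m        if n = k + m.
   The first is nonnegative by the AM-GM inequality (3^2 <= 2*5); the second,
   after multiplying by 30^m, is 15^m - 2*10^m + 6^m, nonnegative for m >= 1
   because 15^m already dominates 2*10^m once m >= 2.  Hence p_n lies in NT.
   For k = n the guard value is exactly 0, so lowering the third coordinate by
   any t > 0 leaves NT; p_n is therefore a limit of points outside NT and,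
   being in NT itself, lies on its frontier (criterion frontier_straddle). *)

lemma mem_NT_iff:
  "(x1, x2, x3) \<in> NT \<longleftrightarrow> (\<forall>k::nat. 0 \<le> 2^k * x1 + 2 * 3^k * x2 + 5^k * x3)"
  by (simp add: NT_def)

lemma two_mult_le_add_if_sq_le_mult:
  fixes a b c :: real
  assumes "0 \<le> a" "0 \<le> b" "c\<^sup>2 \<le> a * b"
  shows "2 * c \<le> a + b"
proof -
  have "4 * (a * b) \<le> (a + b)\<^sup>2"
    using sum_squares_ge_zero[of "a - b" 0] by (simp add: power2_eq_square algebra_simps)
  with assms(3) have "(2 * c)\<^sup>2 \<le> (a + b)\<^sup>2"
    by (simp add: power_mult_distrib)
  moreover have "0 \<le> a + b" using assms by linarith
  ultimately show ?thesis by (rule power2_le_imp_le)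
qed

lemma two_pow_le_add_pow_if_sq_le_mult:
  fixes a b c :: real
  assumes "0 \<le> a" "0 \<le> b" "0 \<le> c" "c\<^sup>2 \<le> a * b"
  shows "2 * c^m \<le> a^m + b^m"
proof (rule two_mult_le_add_if_sq_le_mult)
  have "(c\<^sup>2)^m \<le> (a * b)^m"
    using assms by (intro power_mono) auto
  moreover have "(c^m)\<^sup>2 = (c\<^sup>2)^m"
    by (simp flip: power_mult add: mult.commute)
  ultimately show "(c^m)\<^sup>2 \<le> a^m * b^m"
    by (simp add: power_mult_distrib)
qed (use assms in simp_all)

lemma guard_after_nonneg: "(0::real) \<le> 2^m - 2 * 3^m + 5^m"
  using two_pow_le_add_pow_if_sq_le_mult[of 2 5 3 m] by simp

lemma two_pow_ten_le:
  assumes "1 \<le> m"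
  shows "(2::real) * 10^m \<le> 15^m + 6^m"
proof (cases "m = 1")
  case False
  define j where "j = m - 2"
  have m: "m = j + 2" using assms False unfolding j_def by simp
  have "(10::real)^j \<le> 15^j" by (rule power_mono) auto
  moreover have "(2::real) * 10^m = 200 * 10^j" "(15::real)^m = 225 * 15^j"
    by (simp_all add: m power_add)
  moreover have "(0::real) \<le> 15^j" by simp
  ultimately have "(2::real) * 10^m \<le> 15^m" by linarith
  moreover have "(0::real) \<le> 6^m" by simp
  ultimately show ?thesis by linarith
qed simp

lemma guard_before_nonneg:
  assumes "1 \<le> m"
  shows "(0::real) \<le> 1/2^m - 2/3^m + 1/5^m"
proof -
  have "1/2^m - 2/3^m + 1/5^m = (15^m - 2 * 10^m + 6^m) / (30::real)^m"
    by (simp add: field_simps flip: power_mult_distrib)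
  then show ?thesis using two_pow_ten_le[OF assms] by simp
qed

lemma point_in_NT: "(1 / 2^n, - (1 / 3^n), 1 / 5^n) \<in> NT"
  unfolding mem_NT_iff
proof
  fix k :: nat
  show "0 \<le> 2^k * (1 / 2^n) + 2 * 3^k * - (1 / 3^n) + 5^k * (1 / (5::real)^n)"
  proof (cases "n \<le> k")
    case True
    then obtain m where "k = n + m" using le_Suc_ex by blast
    then show ?thesis using guard_after_nonneg[of m] by (simp add: power_add)
  next
    case False
    define m where "m = n - k"
    have "n = k + m" "1 \<le> m" using False unfolding m_def by simp_all
    then show ?thesis using guard_before_nonneg[of m] by (simp add: power_add)
  qed
qed

text \<open>The n-th guard is tight at p_n, so lowering the last coordinate leaves NT.\<close>
lemma point_lowered_notin_NT:
  assumes "0 < t"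
  shows "(1 / 2^n, - (1 / 3^n), 1 / 5^n - t) \<notin> NT"
proof
  assume "(1 / 2^n, - (1 / 3^n), 1 / 5^n - t) \<in> NT"
  then have "0 \<le> 2^n * (1 / 2^n) + 2 * 3^n * - (1 / 3^n) + 5^n * (1 / 5^n - t :: real)"
    unfolding mem_NT_iff by blast
  then have "0 \<le> - (5^n * t :: real)" by (simp add: algebra_simps)
  moreover have "0 < (5::real)^n * t" using assms by simp
  ultimately show False by linarith
qed

theorem lemma14:
  fixes n :: nat
  shows "(1 / 2^n, - (1 / 3^n), 1 / 5^n) \<in> frontier NT"
  unfolding frontier_straddle
proof (intro allI impI conjI)
  fix e :: real
  assume "0 < e"
  let ?p = "(1 / 2^n, - (1 / 3^n), 1 / 5^n) :: real \<times> real \<times> real"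
  let ?q = "(1 / 2^n, - (1 / 3^n), 1 / 5^n - e / 2) :: real \<times> real \<times> real"
  show "\<exists>x\<in>NT. dist ?p x < e"
    using point_in_NT \<open>0 < e\<close> by (intro bexI[of _ ?p]) simp_all
  have "dist ?p ?q = e / 2" using \<open>0 < e\<close> by (simp add: dist_Pair_Pair dist_real_def)
  then show "\<exists>x. x \<notin> NT \<and> dist ?p x < e"
    using point_lowered_notin_NT[of "e / 2" n] \<open>0 < e\<close> by force
qed

end
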